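(* Suppose $\|\mu_a\|_\infty,\|\widehat\mu_a\|_\infty\le B<\infty$ a.s. for all $a$. With $f_C(x)=\|x-\Pi_C(x)\|_2^2$, $$\sup_{C\in\mathcal{C}_k}\big|\mathbb{P}\{f_C(\widehat\mu)-f_C(\mu)\}\big|\lesssim\max_a\|\widehat\mu_a-\mu_a\|_{\mathbb{P},1}.$$
   Context: $Z=(Y,A,X)\sim\mathbb{P}$, $A\in\mathcal{A}=\{1,\dots,p\}$; $\mu_a(X)=\mathbb{E}(Y\mid X,A=a)$, $\mu=(\mu_1(X),\dots,\mu_p(X))^\top$; $\widehat\mu$ an estimator of $\mu$ held fixed under $\mathbb{P}$. Codebooks $C=\{c_1,\dots,c_k\}\subset\mathbb{R}^p$; $\mathcal{C}_k$ the codebooks of size $k$ in the image of $\mu$; $\Pi_C(x)=\arg\min_{c\in C}\|c-x\|_2^2$. $\|f\|_{\mathbb{P},1}=\int|f|d\mathbb{P}$; $\lesssim$ inequality up to a multiplicative constant. *)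

theory Defs
  imports "HOL-Probability.Probability"
begin

definition proj_cb :: "(real ^ 'p) set \<Rightarrow> real ^ 'p \<Rightarrow> real ^ 'p" where
  "proj_cb C x = (ARG_MIN (\<lambda>c. (norm (c - x))\<^sup>2) c. c \<in> C)"

definition f_cb :: "(real ^ 'p) set \<Rightarrow> real ^ 'p \<Rightarrow> real" where
  "f_cb C x = (norm (x - proj_cb C x))\<^sup>2"

definition codebooks :: "'a measure \<Rightarrow> ('a \<Rightarrow> real ^ 'p) \<Rightarrow> nat \<Rightarrow> (real ^ 'p) set set" where
  "codebooks M mu k = {C. finite C \<and> card C = k \<and> C \<subseteq> mu ` space M}"

end

theory Submission
  imports Defs
begin

text \<open>For every codeword c the map x \<mapsto> ||x - c||^2 is 4B-Lipschitz with respect to the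
  l1 norm on the cube [-B, B]^p, because ||y - c||^2 - ||x - c||^2 = (y - x) \<bullet> (y + x - 2c).
  The loss f_C is the minimum of these maps over the codebook, so it is 4B-Lipschitz as well,
  provided the codewords lie in the cube; this holds since they are values of mu.
  Integrating the pointwise bound and estimating the sum of the p coordinate errors by p times
  the largest one gives the claim with constant 4Bp.\<close>

lemma proj_cb_in:
  assumes "finite C" "C \<noteq> {}"
  shows "proj_cb C x \<in> C"
  using arg_min_if_finite(1)[OF assms, of "\<lambda>c. (norm (c - x))\<^sup>2"]
  unfolding proj_cb_def arg_min_on_def by simp

lemma f_cb_le_dist:
  assumes "finite C" "c \<in> C"
  shows "f_cb C x \<le> (norm (x - c))\<^sup>2"
proof -
  have "C \<noteq> {}" using assms(2) by blast
  then have "\<not> (norm (c - x))\<^sup>2 < (norm (proj_cb C x - x))\<^sup>2"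
    using arg_min_if_finite(2)[OF assms(1), of "\<lambda>c. (norm (c - x))\<^sup>2"] assms(2)
    unfolding proj_cb_def arg_min_on_def by simp
  then show ?thesis
    unfolding f_cb_def by (simp add: norm_minus_commute not_less)
qed

lemma norm_sq_eq_sum_components: "(norm (v :: real ^ 'p))\<^sup>2 = (\<Sum>a\<in>UNIV. (v $ a)\<^sup>2)"
  unfolding power2_norm_eq_inner inner_vec_def by (simp add: power2_eq_square)

lemma norm_sq_diff_le_l1_dist:
  fixes x y c :: "real ^ 'p"
  assumes "\<forall>a. \<bar>x $ a\<bar> \<le> B" "\<forall>a. \<bar>y $ a\<bar> \<le> B" "\<forall>a. \<bar>c $ a\<bar> \<le> B"
  shows "(norm (y - c))\<^sup>2 - (norm (x - c))\<^sup>2 \<le> 4 * B * (\<Sum>a\<in>UNIV. \<bar>y $ a - x $ a\<bar>)"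
proof -
  have "(norm (y - c))\<^sup>2 - (norm (x - c))\<^sup>2 = (\<Sum>a\<in>UNIV. (y $ a - x $ a) * (y $ a + x $ a - 2 * c $ a))"
    unfolding norm_sq_eq_sum_components sum_subtractf[symmetric]
    by (rule sum.cong) (auto simp: power2_eq_square algebra_simps)
  also have "\<dots> \<le> (\<Sum>a\<in>UNIV. \<bar>y $ a - x $ a\<bar> * (4 * B))"
  proof (rule sum_mono)
    fix a
    have "\<bar>y $ a + x $ a - 2 * c $ a\<bar> \<le> 4 * B"
      using assms[rule_format, of a] by linarith
    then have "\<bar>(y $ a - x $ a) * (y $ a + x $ a - 2 * c $ a)\<bar> \<le> \<bar>y $ a - x $ a\<bar> * (4 * B)"
      unfolding abs_mult by (intro mult_left_mono) auto
    then show "(y $ a - x $ a) * (y $ a + x $ a - 2 * c $ a) \<le> \<bar>y $ a - x $ a\<bar> * (4 * B)"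
      by linarith
  qed
  also have "\<dots> = 4 * B * (\<Sum>a\<in>UNIV. \<bar>y $ a - x $ a\<bar>)"
    by (simp add: sum_distrib_left mult.commute)
  finally show ?thesis .
qed

lemma f_cb_diff_le_l1_dist:
  fixes x y :: "real ^ 'p"
  assumes "finite C" "C \<noteq> {}" "\<forall>c\<in>C. \<forall>a. \<bar>c $ a\<bar> \<le> B"
    and "\<forall>a. \<bar>x $ a\<bar> \<le> B" "\<forall>a. \<bar>y $ a\<bar> \<le> B"
  shows "\<bar>f_cb C y - f_cb C x\<bar> \<le> 4 * B * (\<Sum>a\<in>UNIV. \<bar>y $ a - x $ a\<bar>)"
proof -
  have one_sided: "f_cb C y - f_cb C x \<le> 4 * B * (\<Sum>a\<in>UNIV. \<bar>y $ a - x $ a\<bar>)"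
    if "\<forall>a. \<bar>x $ a\<bar> \<le> B" "\<forall>a. \<bar>y $ a\<bar> \<le> B" for x y :: "real ^ 'p"
  proof -
    have px: "proj_cb C x \<in> C" using proj_cb_in assms(1,2) .
    then have "f_cb C y \<le> (norm (y - proj_cb C x))\<^sup>2"
      using f_cb_le_dist assms(1) by blast
    moreover have "(norm (y - proj_cb C x))\<^sup>2 - f_cb C x \<le> 4 * B * (\<Sum>a\<in>UNIV. \<bar>y $ a - x $ a\<bar>)"
      unfolding f_cb_def using norm_sq_diff_le_l1_dist that assms(3) px by blast
    ultimately show ?thesis by linarith
  qed
  show ?thesis
    using one_sided[of x y] one_sided[of y x] assms(4,5) by (simp add: abs_minus_commute abs_le_iff)
qed

lemma (in finite_measure) integrable_abs_component_diff:
  fixes mu muh :: "'a \<Rightarrow> real ^ 'p"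
  assumes "mu \<in> borel_measurable M" "muh \<in> borel_measurable M"
    and "AE \<omega> in M. \<bar>mu \<omega> $ a\<bar> \<le> B" "AE \<omega> in M. \<bar>muh \<omega> $ a\<bar> \<le> B"
  shows "integrable M (\<lambda>\<omega>. \<bar>muh \<omega> $ a - mu \<omega> $ a\<bar>)"
proof (rule integrable_const_bound[where B = "2 * B"])
  show "AE \<omega> in M. norm \<bar>muh \<omega> $ a - mu \<omega> $ a\<bar> \<le> 2 * B"
    using assms(3,4) by eventually_elim auto
  show "(\<lambda>\<omega>. \<bar>muh \<omega> $ a - mu \<omega> $ a\<bar>) \<in> borel_measurable M"
    using measurable_compose[OF assms(1) borel_measurable_nth]
      measurable_compose[OF assms(2) borel_measurable_nth] by measurable
qed

lemma (in finite_measure) abs_integral_diff_le_Max_component_error: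
  fixes mu muh :: "'a \<Rightarrow> real ^ 'p" and g :: "real ^ 'p \<Rightarrow> real"
  assumes "\<And>a. integrable M (\<lambda>\<omega>. \<bar>muh \<omega> $ a - mu \<omega> $ a\<bar>)" "L \<ge> 0"
    and "AE \<omega> in M. \<bar>g (muh \<omega>) - g (mu \<omega>)\<bar> \<le> L * (\<Sum>a\<in>UNIV. \<bar>muh \<omega> $ a - mu \<omega> $ a\<bar>)"
  shows "\<bar>\<integral>\<omega>. (g (muh \<omega>) - g (mu \<omega>)) \<partial>M\<bar>
    \<le> L * real CARD('p) * (MAX a\<in>UNIV. \<integral>\<omega>. \<bar>muh \<omega> $ a - mu \<omega> $ a\<bar> \<partial>M)"
proof -
  define err where "err a = (\<integral>\<omega>. \<bar>muh \<omega> $ a - mu \<omega> $ a\<bar> \<partial>M)" for a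
  have "\<bar>\<integral>\<omega>. (g (muh \<omega>) - g (mu \<omega>)) \<partial>M\<bar> \<le> (\<integral>\<omega>. \<bar>g (muh \<omega>) - g (mu \<omega>)\<bar> \<partial>M)"
    by (rule integral_abs_bound)
  also have "\<dots> \<le> (\<integral>\<omega>. L * (\<Sum>a\<in>UNIV. \<bar>muh \<omega> $ a - mu \<omega> $ a\<bar>) \<partial>M)"
    using assms by (intro integral_mono_AE') (auto intro!: sum_nonneg)
  also have "\<dots> = L * (\<Sum>a\<in>UNIV. err a)"
    unfolding err_def using assms(1) by (simp add: integral_sum)
  also have "\<dots> \<le> L * (real CARD('p) * (MAX a\<in>UNIV. err a))"
    using assms(2) by (intro mult_left_mono sum_bounded_above) auto
  finally show ?thesis
    unfolding err_def by (simp add: mult.assoc)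
qed

theorem lemmaA5:
  fixes B :: real
  shows "\<exists>K::real. \<forall>(M::'a measure) (mu :: 'a \<Rightarrow> real ^ 'p) (muh :: 'a \<Rightarrow> real ^ 'p) (k::nat).
     prob_space M \<longrightarrow>
     mu \<in> borel_measurable M \<longrightarrow> muh \<in> borel_measurable M \<longrightarrow>
     (\<forall>\<omega>\<in>space M. \<forall>a. \<bar>mu \<omega> $ a\<bar> \<le> B) \<longrightarrow>
     (AE \<omega> in M. \<forall>a. \<bar>muh \<omega> $ a\<bar> \<le> B) \<longrightarrow>
     k \<ge> 1 \<longrightarrow>
     (\<forall>C\<in>codebooks M mu k.
        \<bar>\<integral>\<omega>. (f_cb C (muh \<omega>) - f_cb C (mu \<omega>)) \<partial>M\<bar>
          \<le> K * (MAX a\<in>UNIV. \<integral>\<omega>. \<bar>muh \<omega> $ a - mu \<omega> $ a\<bar> \<partial>M))"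
proof (intro exI[of _ "4 * B * real CARD('p)"] allI impI ballI)
  fix M :: "'a measure" and mu muh :: "'a \<Rightarrow> real ^ 'p" and k :: nat and C
  assume "prob_space M" and meas: "mu \<in> borel_measurable M" "muh \<in> borel_measurable M"
    and mu_bounded: "\<forall>\<omega>\<in>space M. \<forall>a. \<bar>mu \<omega> $ a\<bar> \<le> B"
    and muh_bounded: "AE \<omega> in M. \<forall>a. \<bar>muh \<omega> $ a\<bar> \<le> B"
    and "k \<ge> 1" and "C \<in> codebooks M mu k"
  interpret prob_space M by fact
  have "finite C" "C \<noteq> {}" and C_bounded: "\<forall>c\<in>C. \<forall>a. \<bar>c $ a\<bar> \<le> B"
    using \<open>C \<in> codebooks M mu k\<close> \<open>k \<ge> 1\<close> mu_bounded unfolding codebooks_def by auto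
  have "B \<ge> 0"
    using mu_bounded not_empty by force
  have "AE \<omega> in M. \<bar>f_cb C (muh \<omega>) - f_cb C (mu \<omega>)\<bar>
      \<le> 4 * B * (\<Sum>a\<in>UNIV. \<bar>muh \<omega> $ a - mu \<omega> $ a\<bar>)"
    using muh_bounded AE_space
    by eventually_elim (use f_cb_diff_le_l1_dist[OF \<open>finite C\<close> \<open>C \<noteq> {}\<close> C_bounded] mu_bounded in blast)
  moreover have "integrable M (\<lambda>\<omega>. \<bar>muh \<omega> $ a - mu \<omega> $ a\<bar>)" for a
    using meas mu_bounded muh_bounded
    by (intro integrable_abs_component_diff[where B = B]) (auto intro: AE_I2)
  ultimately show "\<bar>\<integral>\<omega>. (f_cb C (muh \<omega>) - f_cb C (mu \<omega>)) \<partial>M\<bar>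
      \<le> 4 * B * real CARD('p) * (MAX a\<in>UNIV. \<integral>\<omega>. \<bar>muh \<omega> $ a - mu \<omega> $ a\<bar> \<partial>M)"
    using \<open>B \<ge> 0\<close> by (intro abs_integral_diff_le_Max_component_error) auto
qed

end
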